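(* Let $0<T\le 1$ and let $f$ be a function on $[0,T]\times B$ with $|||f|||_{0,\frac12;T}\le 1$. Then $$\frac1T\int_0^T\|f(t)\|_{L^2_x(B)}^2\,dt\le C,$$ where $C$ is an absolute constant (independent of $T$ and $f$).
   Context: $B$ is the unit ball of $\mathbb{R}^3$, $e_n(x)=\frac{\sin(n\pi|x|)}{|x|}$ ($n\in\mathbb{Z}_+$), and $e(y)=e^{2\pi i y}$. The norm $|||\cdot|||=|||\cdot|||_{0,\frac12;T}$ is the norm whose unit ball consists of the functions of the form $$\sum_{n,m}\frac{a_{n,m}}{(|n^2-m|+\frac1T)^{1/2}}e_n(x)e(mt)+\sum_{\substack{n,m\\|n^2-m|>\frac1T}}\frac{a_n}{|n^2-m|}e_n(x)e(mt),\qquad n\in\mathbb{Z}_+,\ m\in\mathbb{Z},$$ with $\sum_{n,m}|a_{n,m}|^2\le1$ and $\sum_n|a_n|^2\le 1$. For a function on $[0,T]\times B$, $|||\cdot|||$ is the infimum over all such representations valid for $t\in[0,T]$. *)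

theory Defs
  imports "HOL-Analysis.Analysis"
begin

definition e_rad :: "nat \<Rightarrow> real^3 \<Rightarrow> complex" where
  "e_rad n x = complex_of_real (sin (real n * pi * norm x) / norm x)"

definition e_time :: "real \<Rightarrow> complex" where
  "e_time y = exp (2 * complex_of_real pi * \<i> * complex_of_real y)"

definition rep_partial ::
  "real \<Rightarrow> (nat \<Rightarrow> int \<Rightarrow> complex) \<Rightarrow> (nat \<Rightarrow> complex) \<Rightarrow> nat \<Rightarrow> real \<Rightarrow> real^3 \<Rightarrow> complex" where
  "rep_partial T a b N t x =
     (\<Sum>n\<in>{1..N}. \<Sum>m\<in>{-int N..int N}.
        (a n m / complex_of_real (sqrt (\<bar>real n ^ 2 - real_of_int m\<bar> + 1 / T))
         + (if \<bar>real n ^ 2 - real_of_int m\<bar> > 1 / T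
            then b n / complex_of_real \<bar>real n ^ 2 - real_of_int m\<bar> else 0))
        * e_rad n x * e_time (real_of_int m * t))"

text \<open>f (on [0,T] x B) equals lam times an element of the unit ball of the norm
  |||.|||_{0,1/2;T}; the series is understood as an L^2([0,T] x B) limit of its partial sums.\<close>
definition in_scaled_ball :: "real \<Rightarrow> real \<Rightarrow> (real \<Rightarrow> real^3 \<Rightarrow> complex) \<Rightarrow> bool" where
  "in_scaled_ball T lam f \<longleftrightarrow>
     (\<exists>a b.
        (\<forall>F. finite F \<and> F \<subseteq> {1..} \<times> UNIV \<longrightarrow> (\<Sum>(n,m)\<in>F. (cmod (a n m))\<^sup>2) \<le> 1) \<and>
        (\<forall>F. finite F \<and> F \<subseteq> {1..} \<longrightarrow> (\<Sum>n\<in>F. (cmod (b n))\<^sup>2) \<le> 1) \<and>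
        ((\<lambda>N. \<integral>\<^sup>+ t\<in>{0..T}. (\<integral>\<^sup>+ x\<in>ball 0 1.
              ennreal ((cmod (f t x - complex_of_real lam * rep_partial T a b N t x))\<^sup>2) \<partial>lborel) \<partial>lborel)
          \<longlonglongrightarrow> 0))"

text \<open>The norm |||f|||_{0,1/2;T} (Minkowski functional of the unit ball; top if no representation).\<close>
definition triple_norm :: "real \<Rightarrow> (real \<Rightarrow> real^3 \<Rightarrow> complex) \<Rightarrow> ennreal" where
  "triple_norm T f = Inf {ennreal lam | lam. lam > 0 \<and> in_scaled_ball T lam f}"

end

theory Submission
  imports Defs
begin

text \<open>Take \<open>\<lambda> < 2\<close> with \<open>f\<close> in the \<open>\<lambda>\<close>-scaled unit ball and a square partial sum \<open>P\<^sub>N\<close>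
  of the representation with \<open>\<lambda> P\<^sub>N\<close> arbitrarily close to \<open>f\<close> in \<open>L\<^sup>2([0,T] \<times> B)\<close>.
  In polar coordinates the volume density \<open>3 V r\<^sup>2\<close> of the ball (\<open>V\<close> its volume) cancels the
  factor \<open>1/|x|\<^sup>2\<close> of \<open>|e\<^sub>n(x)|\<^sup>2\<close>, so the \<open>e\<^sub>n\<close> are orthogonal on \<open>B\<close> with
  \<open>\<parallel>e\<^sub>n\<parallel>\<^sup>2 = 3V/2\<close>, while the \<open>e(m t)\<close> are orthonormal on \<open>[0,1] \<supseteq> [0,T]\<close>.
  Hence \<open>\<parallel>P\<^sub>N\<parallel>\<^sup>2 \<le> 3V/2 \<Sum> |c\<^sub>n\<^sub>m|\<^sup>2\<close> for the coefficients \<open>c\<^sub>n\<^sub>m\<close> of \<open>P\<^sub>N\<close>.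
  As \<open>|x + y|\<^sup>2 \<le> 2|x|\<^sup>2 + 2|y|\<^sup>2\<close>, the \<open>a\<close>-part of \<open>c\<^sub>n\<^sub>m\<close> contributes at most
  \<open>2T \<Sum> |a\<^sub>n\<^sub>m|\<^sup>2 \<le> 2T\<close> and the \<open>b\<close>-part at most
  \<open>2|b\<^sub>n|\<^sup>2 \<Sum>\<^bsub>|n\<^sup>2 - m| > 1/T\<^esub> |n\<^sup>2 - m|\<^sup>-\<^sup>2 \<le> 8T |b\<^sub>n|\<^sup>2\<close>; so \<open>\<Sum> |c\<^sub>n\<^sub>m|\<^sup>2 \<le> 10 T\<close>, and
  \<open>\<parallel>f\<parallel>\<^sup>2 \<le> 2 \<parallel>f - \<lambda> P\<^sub>N\<parallel>\<^sup>2 + 2 \<lambda>\<^sup>2 \<parallel>P\<^sub>N\<parallel>\<^sup>2\<close> gives \<open>\<parallel>f\<parallel>\<^sup>2 \<le> 30 V \<lambda>\<^sup>2 T\<close>.\<close>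

section \<open>Nonnegative integrals without measurability\<close>

text \<open>The function \<open>f\<close> of the theorem is not assumed measurable, so its nonnegative integral
  is only a lower integral and the library's additivity and homogeneity laws do not apply.\<close>

lemma nn_integral_add_le:
  assumes v: "v \<in> borel_measurable M"
  shows "(\<integral>\<^sup>+x. u x + v x \<partial>M) \<le> integral\<^sup>N M u + integral\<^sup>N M v"
  unfolding nn_integral_def[of M "\<lambda>x. u x + v x"]
proof (rule SUP_least)
  fix g assume g: "g \<in> {g. simple_function M g \<and> g \<le> (\<lambda>x. u x + v x)}"
  define w where "w x = (if v x = top then 0 else g x - v x)" for x
  have [measurable]: "g \<in> borel_measurable M"
    using g by (auto intro: borel_measurable_simple_function)
  have wm: "w \<in> borel_measurable M"
    unfolding w_def using v by measurable
  have wu: "w x \<le> u x" for x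
    using g unfolding w_def by (auto simp: le_fun_def ennreal_minus_le_iff add.commute)
  have gw: "g x \<le> w x + v x" for x
    unfolding w_def by (auto simp: diff_add_self_ennreal)
  have "integral\<^sup>S M g = integral\<^sup>N M g"
    using g by (simp add: nn_integral_eq_simple_integral)
  also have "\<dots> \<le> (\<integral>\<^sup>+x. w x + v x \<partial>M)" by (intro nn_integral_mono gw)
  also have "\<dots> = integral\<^sup>N M w + integral\<^sup>N M v" using wm v by (simp add: nn_integral_add)
  also have "\<dots> \<le> integral\<^sup>N M u + integral\<^sup>N M v" by (intro add_right_mono nn_integral_mono wu)
  finally show "integral\<^sup>S M g \<le> integral\<^sup>N M u + integral\<^sup>N M v" .
qed

lemma nn_integral_cmult_le:
  fixes r :: real
  assumes r: "r > 0"
  shows "(\<integral>\<^sup>+x. ennreal r * u x \<partial>M) \<le> ennreal r * integral\<^sup>N M u"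
  unfolding nn_integral_def[of M "\<lambda>x. ennreal r * u x"]
proof (rule SUP_least)
  fix g assume g: "g \<in> {g. simple_function M g \<and> g \<le> (\<lambda>x. ennreal r * u x)}"
  define w where "w x = ennreal (1/r) * g x" for x
  have inv: "ennreal (1/r) * ennreal r = 1"
    using r by (simp flip: ennreal_mult)
  have wm: "w \<in> borel_measurable M"
    unfolding w_def using g by (auto intro: borel_measurable_simple_function)
  have wu: "w x \<le> u x" for x
  proof -
    have "w x \<le> ennreal (1/r) * (ennreal r * u x)"
      unfolding w_def using g by (intro mult_left_mono) (auto simp: le_fun_def)
    then show ?thesis using inv by (simp add: mult.assoc[symmetric])
  qed
  have gw: "g x = ennreal r * w x" for x
    unfolding w_def using inv by (simp add: mult.assoc[symmetric] mult.commute)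
  have "integral\<^sup>S M g = (\<integral>\<^sup>+x. ennreal r * w x \<partial>M)"
    using g by (simp add: nn_integral_eq_simple_integral gw[abs_def])
  also have "\<dots> = ennreal r * integral\<^sup>N M w" using wm by (simp add: nn_integral_cmult)
  also have "\<dots> \<le> ennreal r * integral\<^sup>N M u" by (intro mult_left_mono nn_integral_mono wu) simp
  finally show "integral\<^sup>S M g \<le> ennreal r * integral\<^sup>N M u" .
qed

lemma nn_integral_le_cmult_add:
  fixes r :: real
  assumes "r > 0" "\<And>x. x \<in> space M \<Longrightarrow> u x \<le> ennreal r * (v x + w x)" "w \<in> borel_measurable M"
  shows "integral\<^sup>N M u \<le> ennreal r * (integral\<^sup>N M v + integral\<^sup>N M w)"
proof -
  have "integral\<^sup>N M u \<le> (\<integral>\<^sup>+x. ennreal r * (v x + w x) \<partial>M)"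
    using assms(2) by (rule nn_integral_mono)
  also have "\<dots> \<le> ennreal r * (\<integral>\<^sup>+x. v x + w x \<partial>M)"
    using assms(1) by (rule nn_integral_cmult_le)
  also have "\<dots> \<le> ennreal r * (integral\<^sup>N M v + integral\<^sup>N M w)"
    using assms(3) by (intro mult_left_mono nn_integral_add_le) simp_all
  finally show ?thesis .
qed

lemma norm_sq_le_approx:
  fixes f g :: "'a::real_normed_vector"
  shows "(norm f)\<^sup>2 \<le> 2 * ((norm (f - g))\<^sup>2 + (norm g)\<^sup>2)"
proof -
  have "norm f \<le> norm (f - g) + norm g"
    using norm_triangle_ineq[of "f - g" g] by simp
  then have "(norm f)\<^sup>2 \<le> (norm (f - g) + norm g)\<^sup>2"
    by (intro power_mono) auto
  also have "\<dots> \<le> 2 * ((norm (f - g))\<^sup>2 + (norm g)\<^sup>2)"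
    using sum_squares_bound[of "norm (f - g)" "norm g"] by (simp add: power2_sum)
  finally show ?thesis .
qed

lemma nn_integral_norm_sq_le_approx:
  fixes f g :: "'a \<Rightarrow> 'b \<Rightarrow> 'c::real_normed_vector"
  assumes [measurable]: "A \<in> sets M" "B \<in> sets N" "\<And>t. g t \<in> borel_measurable N"
    and [measurable]: "(\<lambda>t. \<integral>\<^sup>+x\<in>B. ennreal ((norm (g t x))\<^sup>2) \<partial>N) \<in> borel_measurable M"
  shows "(\<integral>\<^sup>+t\<in>A. (\<integral>\<^sup>+x\<in>B. ennreal ((norm (f t x))\<^sup>2) \<partial>N) \<partial>M)
    \<le> 2 * ((\<integral>\<^sup>+t\<in>A. (\<integral>\<^sup>+x\<in>B. ennreal ((norm (f t x - g t x))\<^sup>2) \<partial>N) \<partial>M)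
           + (\<integral>\<^sup>+t\<in>A. (\<integral>\<^sup>+x\<in>B. ennreal ((norm (g t x))\<^sup>2) \<partial>N) \<partial>M))"
proof -
  have inner: "(\<integral>\<^sup>+x\<in>B. ennreal ((norm (f t x))\<^sup>2) \<partial>N)
    \<le> 2 * ((\<integral>\<^sup>+x\<in>B. ennreal ((norm (f t x - g t x))\<^sup>2) \<partial>N)
           + (\<integral>\<^sup>+x\<in>B. ennreal ((norm (g t x))\<^sup>2) \<partial>N))" for t
  proof (rule nn_integral_le_cmult_add[where r = 2, unfolded ennreal_numeral])
    show "(2::real) > 0" by simp
  next
    fix x
    have "ennreal ((norm (f t x))\<^sup>2) \<le> ennreal (2 * ((norm (f t x - g t x))\<^sup>2 + (norm (g t x))\<^sup>2))"
      by (intro ennreal_leI norm_sq_le_approx)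
    then show "ennreal ((norm (f t x))\<^sup>2) * indicator B x
      \<le> 2 * (ennreal ((norm (f t x - g t x))\<^sup>2) * indicator B x + ennreal ((norm (g t x))\<^sup>2) * indicator B x)"
      by (simp add: ennreal_mult indicator_def)
  qed measurable
  show ?thesis
  proof (rule nn_integral_le_cmult_add[where r = 2, unfolded ennreal_numeral])
    show "(2::real) > 0" by simp
  next
    fix t
    show "(\<integral>\<^sup>+x\<in>B. ennreal ((norm (f t x))\<^sup>2) \<partial>N) * indicator A t
      \<le> 2 * ((\<integral>\<^sup>+x\<in>B. ennreal ((norm (f t x - g t x))\<^sup>2) \<partial>N) * indicator A t
             + (\<integral>\<^sup>+x\<in>B. ennreal ((norm (g t x))\<^sup>2) \<partial>N) * indicator A t)"
      using inner[of t] by (simp add: indicator_def)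
  qed measurable
qed

section \<open>Radial integration over the unit ball\<close>

lemma emeasure_unit_ball_norm_greater:
  "emeasure lborel (ball (0::'a::euclidean_space) 1 \<inter> {x. s < norm x})
     = ennreal (if s < 1 then unit_ball_vol DIM('a) * (1 - (max s 0) ^ DIM('a)) else 0)"
proof -
  let ?V = "unit_ball_vol DIM('a)"
  have ball: "emeasure lborel (ball (0::'a) 1) = ennreal ?V"
    using emeasure_ball[of 1 "0::'a"] by simp
  consider "s < 0" | "0 \<le> s" "s < 1" | "1 \<le> s" by linarith
  then show ?thesis
  proof cases
    case 1
    then have "ball (0::'a) 1 \<inter> {x. s < norm x} = ball 0 1"
      using norm_ge_zero[where 'a='a] by (auto intro: less_le_trans)
    then show ?thesis using 1 ball by (simp add: power_0_left)
  next
    case 2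
    have cball: "emeasure lborel (cball (0::'a) s) = ennreal (?V * s ^ DIM('a))"
      using emeasure_cball[of s "0::'a"] 2 by simp
    have "ball (0::'a) 1 \<inter> {x. s < norm x} = ball 0 1 - cball 0 s"
      using 2 by auto
    moreover have "emeasure lborel (ball (0::'a) 1 - cball 0 s)
        = emeasure lborel (ball (0::'a) 1) - emeasure lborel (cball (0::'a) s)"
      using 2 by (intro emeasure_Diff) (auto simp: cball)
    ultimately have "emeasure lborel (ball (0::'a) 1 \<inter> {x. s < norm x})
        = emeasure lborel (ball (0::'a) 1) - emeasure lborel (cball (0::'a) s)"
      by simp
    also have "\<dots> = ennreal (?V - ?V * s ^ DIM('a))"
      unfolding ball cball using 2 by (subst ennreal_minus) (auto intro!: mult_left_le power_le_one)
    finally show ?thesis using 2 by (simp add: algebra_simps)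
  next
    case 3
    then have "ball (0::'a) 1 \<inter> {x. s < norm x} = {}" by auto
    then show ?thesis using 3 by simp
  qed
qed

lemma emeasure_radial_density_greaterThan:
  fixes d :: nat
  defines "\<rho> \<equiv> \<lambda>r. ennreal (d * unit_ball_vol d * r ^ (d - 1)) * indicator {0<..<1} r"
  shows "emeasure (density lborel \<rho>) {s<..} = ennreal (if s < 1 then unit_ball_vol d * (1 - (max s 0) ^ d) else 0)"
proof -
  let ?V = "unit_ball_vol d" and ?a = "max s 0"
  have "emeasure (density lborel \<rho>) {s<..} = (\<integral>\<^sup>+r. \<rho> r * indicator {s<..} r \<partial>lborel)"
    unfolding \<rho>_def by (rule emeasure_density) auto
  also have "\<dots> = (\<integral>\<^sup>+r. ennreal (d * ?V * r ^ (d - 1)) * indicator {?a<..<1} r \<partial>lborel)"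
    unfolding \<rho>_def by (intro nn_integral_cong) (auto simp: indicator_def)
  also have "\<dots> = ennreal (if s < 1 then ?V * (1 - ?a ^ d) else 0)"
  proof (cases "s < 1")
    case True
    have "((\<lambda>r. d * ?V * r ^ (d - 1)) has_integral (?V * 1 ^ d - ?V * ?a ^ d)) {?a..1}"
      using True by (intro fundamental_theorem_of_calculus)
        (auto simp: has_real_derivative_iff_has_vector_derivative[symmetric] intro!: derivative_eq_intros)
    then have "((\<lambda>r. d * ?V * r ^ (d - 1)) has_integral (?V * (1 - ?a ^ d))) {?a<..<1}"
      by (simp add: has_integral_Icc_iff_Ioo algebra_simps)
    then show ?thesis
      using True by (subst nn_integral_has_integral_lebesgue') auto
  qed simp
  finally show ?thesis .
qed

lemma distr_norm_unit_ball:
  "distr (density lborel (indicator (ball (0::'a::euclidean_space) 1))) borel norm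
     = density lborel (\<lambda>r. ennreal (DIM('a) * unit_ball_vol DIM('a) * r ^ (DIM('a) - 1)) * indicator {0<..<1} r)"
proof (rule measure_eqI_lessThan)
  let ?D = "density lborel (indicator (ball (0::'a) 1))"
  have [measurable]: "ball (0::'a) 1 \<in> sets borel" by simp
  have [measurable]: "norm -` {s<..} \<in> sets (borel :: 'a measure)" for s
    by (intro borel_open open_vimage continuous_on_norm_id) auto
  have distr: "emeasure (distr ?D borel norm) {s<..}
      = ennreal (if s < 1 then unit_ball_vol DIM('a) * (1 - (max s 0) ^ DIM('a)) else 0)" for s
  proof -
    have "emeasure (distr ?D borel norm) {s<..} = emeasure ?D (norm -` {s<..})"
      by (subst emeasure_distr) auto
    also have "\<dots> = (\<integral>\<^sup>+x. indicator (ball (0::'a) 1) x * indicator (norm -` {s<..}) x \<partial>lborel)"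
      by (subst emeasure_density) auto
    also have "\<dots> = (\<integral>\<^sup>+x. indicator (ball (0::'a) 1 \<inter> {x. s < norm x}) x \<partial>lborel)"
      by (intro nn_integral_cong) (auto simp: indicator_def)
    also have "\<dots> = emeasure lborel (ball (0::'a) 1 \<inter> {x. s < norm x})"
      by (rule nn_integral_indicator) auto
    finally show ?thesis
      by (simp add: emeasure_unit_ball_norm_greater)
  qed
  show "emeasure (distr ?D borel norm) {s<..} < \<infinity>" for s
    unfolding distr by simp
  show "emeasure (distr ?D borel norm) {s<..}
      = emeasure (density lborel (\<lambda>r. ennreal (DIM('a) * unit_ball_vol DIM('a) * r ^ (DIM('a) - 1)) * indicator {0<..<1} r)) {s<..}" for s
    unfolding distr emeasure_radial_density_greaterThan ..
qed simp_all

lemma nn_integral_unit_ball_radial: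
  fixes h :: "real \<Rightarrow> ennreal"
  assumes [measurable]: "h \<in> borel_measurable borel"
  shows "(\<integral>\<^sup>+x\<in>ball (0::'a::euclidean_space) 1. h (norm x) \<partial>lborel)
    = (\<integral>\<^sup>+r\<in>{0<..<1}. ennreal (DIM('a) * unit_ball_vol DIM('a) * r ^ (DIM('a) - 1)) * h r \<partial>lborel)"
proof -
  have [measurable]: "ball (0::'a) 1 \<in> sets borel" by simp
  have "(\<integral>\<^sup>+x\<in>ball (0::'a) 1. h (norm x) \<partial>lborel)
      = integral\<^sup>N (density lborel (indicator (ball (0::'a) 1))) (\<lambda>x. h (norm x))"
    by (subst nn_integral_density) (auto simp: mult.commute)
  also have "\<dots> = integral\<^sup>N (distr (density lborel (indicator (ball (0::'a) 1))) borel norm) h"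
    by (subst nn_integral_distr) auto
  also have "\<dots> = (\<integral>\<^sup>+r\<in>{0<..<1}. ennreal (DIM('a) * unit_ball_vol DIM('a) * r ^ (DIM('a) - 1)) * h r \<partial>lborel)"
    unfolding distr_norm_unit_ball by (subst nn_integral_density) (auto intro!: nn_integral_cong simp: mult_ac)
  finally show ?thesis .
qed

section \<open>Orthogonality\<close>

lemma nn_integral_norm_sq_orthogonal_sum:
  fixes \<phi> :: "'i \<Rightarrow> 'a::euclidean_space \<Rightarrow> complex" and c :: "'i \<Rightarrow> complex"
  assumes "finite I" "\<kappa> \<ge> 0"
    and orth: "\<And>j k. j \<in> I \<Longrightarrow> k \<in> I \<Longrightarrow>
      ((\<lambda>t. \<phi> j t * cnj (\<phi> k t)) has_integral (if j = k then complex_of_real \<kappa> else 0)) S"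
  shows "(\<integral>\<^sup>+t\<in>S. ennreal ((cmod (\<Sum>k\<in>I. c k * \<phi> k t))\<^sup>2) \<partial>lborel) = ennreal (\<kappa> * (\<Sum>k\<in>I. (cmod (c k))\<^sup>2))"
proof -
  define G where "G t = (\<Sum>j\<in>I. \<Sum>k\<in>I. (c j * cnj (c k)) * (\<phi> j t * cnj (\<phi> k t)))" for t
  have norm_sq: "(cmod (\<Sum>k\<in>I. c k * \<phi> k t))\<^sup>2 = Re (G t)" for t
  proof -
    have "complex_of_real ((cmod (\<Sum>k\<in>I. c k * \<phi> k t))\<^sup>2) = (\<Sum>k\<in>I. c k * \<phi> k t) * cnj (\<Sum>k\<in>I. c k * \<phi> k t)"
      by (rule complex_norm_square)
    also have "\<dots> = G t"
      unfolding G_def cnj_sum sum_product by (intro sum.cong refl) (simp add: algebra_simps)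
    finally show ?thesis by (metis Re_complex_of_real)
  qed
  have "(G has_integral (\<Sum>j\<in>I. \<Sum>k\<in>I. (c j * cnj (c k)) * (if j = k then complex_of_real \<kappa> else 0))) S"
    unfolding G_def using assms(1) by (intro has_integral_sum has_integral_mult_right orth ballI)
  also have "(\<Sum>j\<in>I. \<Sum>k\<in>I. (c j * cnj (c k)) * (if j = k then complex_of_real \<kappa> else 0))
      = (\<Sum>j\<in>I. (c j * cnj (c j)) * complex_of_real \<kappa>)"
    using assms(1) by (simp add: if_distrib cong: if_cong)
  also have "\<dots> = complex_of_real (\<kappa> * (\<Sum>k\<in>I. (cmod (c k))\<^sup>2))"
    by (simp add: sum_distrib_left mult.commute flip: complex_norm_square)
  finally have "((\<lambda>t. Re (G t)) has_integral Re (complex_of_real (\<kappa> * (\<Sum>k\<in>I. (cmod (c k))\<^sup>2)))) S"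
    using bounded_linear_Re by (subst o_def[of Re, symmetric]) (rule has_integral_linear)
  then have "((\<lambda>t. (cmod (\<Sum>k\<in>I. c k * \<phi> k t))\<^sup>2) has_integral \<kappa> * (\<Sum>k\<in>I. (cmod (c k))\<^sup>2)) S"
    unfolding norm_sq by simp
  then show ?thesis
    by (rule nn_integral_has_integral_lebesgue'[rotated]) simp
qed

lemma has_integral_sin_mult_sin:
  fixes n k :: nat
  assumes "n \<ge> 1" "k \<ge> 1"
  shows "((\<lambda>r. sin (n * pi * r) * sin (k * pi * r)) has_integral (if n = k then 1/2 else 0)) {0..1}"
proof -
  define F where "F r = (if n = k then r/2 - sin (2 * n * pi * r) / (4 * n * pi)
    else (sin ((real n - k) * pi * r) / ((real n - k) * pi) - sin ((real n + k) * pi * r) / ((real n + k) * pi)) / 2)"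
    for r
  have "(F has_real_derivative sin (n * pi * r) * sin (k * pi * r)) (at r)" for r
  proof (cases "n = k")
    case True
    have "(F has_real_derivative 1/2 - cos (2 * n * pi * r) * (2 * n * pi) / (4 * n * pi)) (at r)"
      unfolding F_def using True by (auto intro!: derivative_eq_intros)
    moreover have "1/2 - cos (2 * n * pi * r) * (2 * n * pi) / (4 * n * pi) = sin (n * pi * r) * sin (k * pi * r)"
      using True assms cos_double_sin[of "n * pi * r"] by (simp add: power2_eq_square field_simps)
    ultimately show ?thesis by simp
  next
    case False
    have "(F has_real_derivative (cos ((real n - k) * pi * r) - cos ((real n + k) * pi * r)) / 2) (at r)"
      unfolding F_def using False assms by (auto intro!: derivative_eq_intros)
    moreover have "(cos ((real n - k) * pi * r) - cos ((real n + k) * pi * r)) / 2 = sin (n * pi * r) * sin (k * pi * r)"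
      by (simp add: left_diff_distrib distrib_right cos_diff cos_add)
    ultimately show ?thesis by simp
  qed
  then have "((\<lambda>r. sin (n * pi * r) * sin (k * pi * r)) has_integral (F 1 - F 0)) {0..1}"
    by (intro fundamental_theorem_of_calculus)
      (auto simp: has_real_derivative_iff_has_vector_derivative[symmetric] intro: has_field_derivative_at_within)
  moreover have "F 1 - F 0 = (if n = k then 1/2 else 0)"
    using sin_npi[of "2 * n"] by (cases "n = k") (simp_all add: F_def left_diff_distrib distrib_right sin_diff sin_add mult.assoc)
  ultimately show ?thesis by simp
qed

lemma has_integral_e_time_mult_cnj:
  fixes m k :: int
  shows "((\<lambda>t. e_time (real_of_int m * t) * cnj (e_time (real_of_int k * t))) has_integral (if m = k then 1 else 0)) {0..1}"
proof -
  define c where "c = 2 * complex_of_real pi * \<i> * of_int (m - k)"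
  have e_time: "e_time (real_of_int m * t) * cnj (e_time (real_of_int k * t)) = exp (c * t)" for t :: real
    unfolding e_time_def c_def exp_cnj by (simp add: exp_add[symmetric] algebra_simps)
  show ?thesis
  proof (cases "m = k")
    case True
    have "((\<lambda>t::real. exp (c * t)) has_integral 1) {0..1}"
      using True has_integral_const_real[where c = "1::complex" and a = 0 and b = 1] by (simp add: c_def)
    then show ?thesis
      unfolding e_time using True by simp
  next
    case False
    then have "c \<noteq> 0" by (simp add: c_def)
    then have "((\<lambda>t::real. exp (c * t)) has_integral ((\<lambda>t::real. exp (c * t) / c) 1 - (\<lambda>t::real. exp (c * t) / c) 0)) {0..1}"
      by (intro fundamental_theorem_of_calculus has_vector_derivative_real_field)
        (auto intro!: derivative_eq_intros)
    moreover have "exp c = 1"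
      using exp_integer_2pi[of "of_int (m - k)"] by (simp add: c_def algebra_simps)
    ultimately show ?thesis using False by (simp add: e_time)
  qed
qed

lemma nn_integral_unit_ball_e_rad_sum:
  fixes d :: "nat \<Rightarrow> complex"
  shows "(\<integral>\<^sup>+x\<in>ball (0::real^3) 1. ennreal ((cmod (\<Sum>n\<in>{1..N}. d n * e_rad n x))\<^sup>2) \<partial>lborel)
     = ennreal (3/2 * unit_ball_vol 3 * (\<Sum>n\<in>{1..N}. (cmod (d n))\<^sup>2))"
proof -
  let ?V = "unit_ball_vol 3"
  let ?S = "\<lambda>r. \<Sum>n\<in>{1..N}. d n * complex_of_real (sin (n * pi * r))"
  have "(\<integral>\<^sup>+x\<in>ball (0::real^3) 1. ennreal ((cmod (\<Sum>n\<in>{1..N}. d n * e_rad n x))\<^sup>2) \<partial>lborel)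
      = (\<integral>\<^sup>+r\<in>{0<..<1}. ennreal (3 * ?V * r\<^sup>2)
           * ennreal ((cmod (\<Sum>n\<in>{1..N}. d n * complex_of_real (sin (n * pi * r) / r)))\<^sup>2) \<partial>lborel)"
    unfolding e_rad_def by (subst nn_integral_unit_ball_radial) (simp_all add: numeral_eq_Suc)
  also have "\<dots> = (\<integral>\<^sup>+r\<in>{0<..<1}. ennreal (3 * ?V) * ennreal ((cmod (?S r))\<^sup>2) \<partial>lborel)"
  proof (intro nn_integral_cong)
    fix r :: real
    have "r\<^sup>2 * (cmod (?S r / r))\<^sup>2 = (cmod (?S r))\<^sup>2" if "0 < r"
      using that by (simp add: norm_divide power_divide)
    then show "ennreal (3 * ?V * r\<^sup>2)
        * ennreal ((cmod (\<Sum>n\<in>{1..N}. d n * complex_of_real (sin (n * pi * r) / r)))\<^sup>2) * indicator {0<..<1} r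
      = ennreal (3 * ?V) * ennreal ((cmod (?S r))\<^sup>2) * indicator {0<..<1} r"
      by (auto simp: indicator_def sum_divide_distrib ennreal_mult'[symmetric] mult.assoc simp flip: ennreal_mult)
  qed
  also have "\<dots> = ennreal (3 * ?V) * (\<integral>\<^sup>+r\<in>{0<..<1}. ennreal ((cmod (?S r))\<^sup>2) \<partial>lborel)"
    by (subst nn_integral_cmult[symmetric]) (auto simp: mult.assoc)
  also have "(\<integral>\<^sup>+r\<in>{0<..<1}. ennreal ((cmod (?S r))\<^sup>2) \<partial>lborel) = ennreal (1/2 * (\<Sum>n\<in>{1..N}. (cmod (d n))\<^sup>2))"
  proof (rule nn_integral_norm_sq_orthogonal_sum)
    fix j k assume "j \<in> {1..N}" "k \<in> {1..N}"
    then have "((\<lambda>r. complex_of_real (sin (j * pi * r) * sin (k * pi * r))) has_integral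
        complex_of_real (if j = k then 1/2 else 0)) {0<..<1}"
      by (intro has_integral_of_real) (simp add: has_integral_Icc_iff_Ioo[symmetric] has_integral_sin_mult_sin)
    then show "((\<lambda>r. complex_of_real (sin (j * pi * r)) * cnj (complex_of_real (sin (k * pi * r)))) has_integral
        (if j = k then complex_of_real (1/2) else 0)) {0<..<1}"
      by (simp add: if_distrib cong: if_cong)
  qed simp_all
  finally show ?thesis
    by (simp add: ennreal_mult'[symmetric] sum_nonneg)
qed

lemma e_time_measurable [measurable]: "e_time \<in> borel_measurable borel"
  unfolding e_time_def by (intro borel_measurable_continuous_onI continuous_intros)

lemma nn_integral_e_time_sum_le:
  fixes c :: "int \<Rightarrow> complex"
  assumes "finite I" "T \<le> 1"
  shows "(\<integral>\<^sup>+t\<in>{0..T}. ennreal ((cmod (\<Sum>m\<in>I. c m * e_time (m * t)))\<^sup>2) \<partial>lborel)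
     \<le> ennreal (\<Sum>m\<in>I. (cmod (c m))\<^sup>2)"
proof -
  have "(\<integral>\<^sup>+t\<in>{0..T}. ennreal ((cmod (\<Sum>m\<in>I. c m * e_time (m * t)))\<^sup>2) \<partial>lborel)
     \<le> (\<integral>\<^sup>+t\<in>{0..1}. ennreal ((cmod (\<Sum>m\<in>I. c m * e_time (m * t)))\<^sup>2) \<partial>lborel)"
    using assms(2) by (intro nn_integral_mono mult_left_mono) (auto simp: indicator_def)
  also have "\<dots> = ennreal (1 * (\<Sum>m\<in>I. (cmod (c m))\<^sup>2))"
    using assms(1) by (intro nn_integral_norm_sq_orthogonal_sum)
      (simp_all only: of_real_1 has_integral_e_time_mult_cnj zero_le_one)
  finally show ?thesis by simp
qed

section \<open>Tails of the series of inverse squares\<close>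

lemma inverse_square_le_telescope:
  fixes x :: real
  assumes "x \<ge> 1"
  shows "1 / x\<^sup>2 \<le> 1 / (x - 1/2) - 1 / (x + 1/2)"
proof -
  have "1 / (x - 1/2) - 1 / (x + 1/2) = 1 / (x\<^sup>2 - 1/4)"
    using assms by (simp add: field_simps power2_eq_square)
  moreover have "1 / x\<^sup>2 \<le> 1 / (x\<^sup>2 - 1/4)"
    using one_le_power[OF assms, of 2] by (intro divide_left_mono mult_pos_pos) linarith+
  ultimately show ?thesis by simp
qed

lemma sum_inverse_square_atLeastLessThan:
  assumes "K \<ge> 1"
  shows "(\<Sum>j\<in>{K..<K+n}. 1 / (real j)\<^sup>2) \<le> 1 / (real K - 1/2) - 1 / (real (K + n) - 1/2)"
proof (induction n)
  case (Suc n)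
  have "1 / (real (K + n))\<^sup>2 \<le> 1 / (real (K + n) - 1/2) - 1 / (real (K + n) + 1/2)"
    using assms by (intro inverse_square_le_telescope) simp
  with Suc show ?case by (simp add: algebra_simps)
qed simp

lemma sum_inverse_square_gt:
  fixes L :: real
  assumes "L \<ge> 1" "finite J" "\<And>j. j \<in> J \<Longrightarrow> L < real j"
  shows "(\<Sum>j\<in>J. 1 / (real j)\<^sup>2) \<le> 2 / L"
proof -
  define K where "K = nat \<lfloor>L\<rfloor> + 1"
  have K: "K \<ge> 1" "L < real K"
    unfolding K_def using assms(1) by linarith+
  have "J \<subseteq> {K..<K + (Max (insert 0 J) + 1)}"
  proof
    fix j assume "j \<in> J"
    then have "L < real j" "j \<le> Max (insert 0 J)"
      using assms(2,3) by auto
    then show "j \<in> {K..<K + (Max (insert 0 J) + 1)}"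
      unfolding K_def using assms(1) by auto linarith
  qed
  then have "(\<Sum>j\<in>J. 1 / (real j)\<^sup>2) \<le> (\<Sum>j\<in>{K..<K + (Max (insert 0 J) + 1)}. 1 / (real j)\<^sup>2)"
    by (intro sum_mono2) auto
  also have "\<dots> \<le> 1 / (real K - 1/2) - 1 / (real (K + (Max (insert 0 J) + 1)) - 1/2)"
    using K(1) by (rule sum_inverse_square_atLeastLessThan)
  also have "\<dots> \<le> 1 / (real K - 1/2)"
    using K(1) by simp
  also have "\<dots> \<le> 2 / L"
    using K assms(1) by (simp add: field_simps)
  finally show ?thesis .
qed

lemma sum_inverse_square_int_gt:
  fixes L :: real
  assumes "L \<ge> 1" "finite J" "\<And>j. j \<in> J \<Longrightarrow> L < real_of_int j"
  shows "(\<Sum>j\<in>J. 1 / (real_of_int j)\<^sup>2) \<le> 2 / L"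
proof -
  have pos: "j > 0" if "j \<in> J" for j
    using assms(1) assms(3)[OF that] by linarith
  have "(\<Sum>j\<in>J. 1 / (real_of_int j)\<^sup>2) = (\<Sum>k\<in>nat ` J. 1 / (real k)\<^sup>2)"
    by (subst sum.reindex) (auto simp: inj_on_def eq_nat_nat_iff less_imp_le dest: pos intro!: sum.cong)
  also have "\<dots> \<le> 2 / L"
    using assms by (intro sum_inverse_square_gt) (auto dest: pos assms(3))
  finally show ?thesis .
qed

lemma sum_inverse_square_int_dist_gt:
  fixes L :: real and c :: int
  assumes "L \<ge> 1" "finite M"
  shows "(\<Sum>m\<in>{m\<in>M. L < \<bar>real_of_int (m - c)\<bar>}. 1 / (real_of_int (m - c))\<^sup>2) \<le> 4 / L"
proof -
  let ?f = "\<lambda>j. 1 / (real_of_int j)\<^sup>2"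
  define M1 where "M1 = {m\<in>M. L < m - c}"
  define M2 where "M2 = {m\<in>M. L < c - m}"
  have "{m\<in>M. L < \<bar>real_of_int (m - c)\<bar>} = M1 \<union> M2"
    unfolding M1_def M2_def by (auto simp: abs_if)
  moreover have "M1 \<inter> M2 = {}" "finite M1" "finite M2"
    unfolding M1_def M2_def using assms by auto
  ultimately have "(\<Sum>m\<in>{m\<in>M. L < \<bar>real_of_int (m - c)\<bar>}. ?f (m - c))
      = (\<Sum>m\<in>M1. ?f (m - c)) + (\<Sum>m\<in>M2. ?f (c - m))"
    by (simp add: sum.union_disjoint power2_commute)
  also have "\<dots> = sum ?f ((\<lambda>m. m - c) ` M1) + sum ?f ((\<lambda>m. c - m) ` M2)"
    by (simp add: sum.reindex inj_on_def)
  also have "\<dots> \<le> 2 / L + 2 / L"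
    using assms \<open>finite M1\<close> \<open>finite M2\<close>
    by (intro add_mono sum_inverse_square_int_gt) (auto simp: M1_def M2_def)
  finally show ?thesis by simp
qed

section \<open>Energy of the representation\<close>

definition rep_coeff :: "real \<Rightarrow> (nat \<Rightarrow> int \<Rightarrow> complex) \<Rightarrow> (nat \<Rightarrow> complex) \<Rightarrow> nat \<Rightarrow> int \<Rightarrow> complex" where
  "rep_coeff T a b n m =
     a n m / complex_of_real (sqrt (\<bar>real n ^ 2 - real_of_int m\<bar> + 1 / T))
     + (if \<bar>real n ^ 2 - real_of_int m\<bar> > 1 / T then b n / complex_of_real \<bar>real n ^ 2 - real_of_int m\<bar> else 0)"

definition rep_mode :: "real \<Rightarrow> (nat \<Rightarrow> int \<Rightarrow> complex) \<Rightarrow> (nat \<Rightarrow> complex) \<Rightarrow> nat \<Rightarrow> nat \<Rightarrow> real \<Rightarrow> complex" where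
  "rep_mode T a b N n t = (\<Sum>m\<in>{-int N..int N}. rep_coeff T a b n m * e_time (real_of_int m * t))"

lemma rep_partial_eq_sum_rep_mode:
  "rep_partial T a b N t x = (\<Sum>n\<in>{1..N}. rep_mode T a b N n t * e_rad n x)"
  unfolding rep_partial_def rep_mode_def rep_coeff_def sum_distrib_right by (simp add: mult_ac)

lemma norm_rep_coeff_sq_le:
  assumes "0 < T"
  shows "(cmod (rep_coeff T a b n m))\<^sup>2 \<le> 2 * T * (cmod (a n m))\<^sup>2 + 2 * (cmod (b n))\<^sup>2 *
    (if 1 / T < \<bar>real_of_int (m - int (n\<^sup>2))\<bar> then 1 / (real_of_int (m - int (n\<^sup>2)))\<^sup>2 else 0)"
proof -
  let ?d = "\<bar>real n ^ 2 - real_of_int m\<bar>"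
  define \<alpha> where "\<alpha> = a n m / complex_of_real (sqrt (?d + 1 / T))"
  define \<beta> where "\<beta> = (if ?d > 1 / T then b n / complex_of_real ?d else 0)"
  have "rep_coeff T a b n m = \<alpha> + \<beta>"
    unfolding rep_coeff_def \<alpha>_def \<beta>_def ..
  then have "(cmod (rep_coeff T a b n m))\<^sup>2 \<le> 2 * (cmod \<alpha>)\<^sup>2 + 2 * (cmod \<beta>)\<^sup>2"
    using norm_sq_le_approx[of "\<alpha> + \<beta>" \<beta>] by simp
  also have "(cmod \<alpha>)\<^sup>2 \<le> T * (cmod (a n m))\<^sup>2"
  proof -
    have pos: "?d + 1 / T > 0"
      using assms by (simp add: add_nonneg_pos)
    have "(cmod \<alpha>)\<^sup>2 = (cmod (a n m))\<^sup>2 / (?d + 1 / T)"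
      unfolding \<alpha>_def using pos by (simp add: norm_divide power_divide)
    also have "\<dots> \<le> (cmod (a n m))\<^sup>2 / (1 / T)"
      using assms pos by (intro divide_left_mono) auto
    finally show ?thesis by (simp add: mult.commute)
  qed
  also have "(cmod \<beta>)\<^sup>2 = (cmod (b n))\<^sup>2 *
      (if 1 / T < \<bar>real_of_int (m - int (n\<^sup>2))\<bar> then 1 / (real_of_int (m - int (n\<^sup>2)))\<^sup>2 else 0)"
    unfolding \<beta>_def by (simp add: norm_divide power_divide abs_minus_commute power2_commute)
  finally show ?thesis by simp
qed

lemma sum_norm_rep_coeff_sq_le:
  assumes T: "0 < T" "T \<le> 1"
    and a: "\<forall>F. finite F \<and> F \<subseteq> {1..} \<times> UNIV \<longrightarrow> (\<Sum>(n,m)\<in>F. (cmod (a n m))\<^sup>2) \<le> 1"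
    and b: "\<forall>F. finite F \<and> F \<subseteq> {1..} \<longrightarrow> (\<Sum>n\<in>F. (cmod (b n))\<^sup>2) \<le> 1"
  shows "(\<Sum>n\<in>{1..N}. \<Sum>m\<in>{-int N..int N}. (cmod (rep_coeff T a b n m))\<^sup>2) \<le> 10 * T"
proof -
  define tail where "tail n = (\<Sum>m\<in>{-int N..int N}.
    if 1 / T < \<bar>real_of_int (m - int (n\<^sup>2))\<bar> then 1 / (real_of_int (m - int (n\<^sup>2)))\<^sup>2 else 0)" for n
  have tail: "tail n \<le> 4 * T" for n
  proof -
    have "tail n = (\<Sum>m\<in>{m\<in>{-int N..int N}. 1 / T < \<bar>real_of_int (m - int (n\<^sup>2))\<bar>}.
        1 / (real_of_int (m - int (n\<^sup>2)))\<^sup>2)"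
      unfolding tail_def by (rule sum.inter_filter[symmetric]) simp
    also have "\<dots> \<le> 4 / (1 / T)"
      using T by (intro sum_inverse_square_int_dist_gt) auto
    finally show ?thesis by simp
  qed
  have "(\<Sum>n\<in>{1..N}. \<Sum>m\<in>{-int N..int N}. (cmod (rep_coeff T a b n m))\<^sup>2)
      \<le> (\<Sum>n\<in>{1..N}. \<Sum>m\<in>{-int N..int N}. 2 * T * (cmod (a n m))\<^sup>2 + 2 * (cmod (b n))\<^sup>2 *
          (if 1 / T < \<bar>real_of_int (m - int (n\<^sup>2))\<bar> then 1 / (real_of_int (m - int (n\<^sup>2)))\<^sup>2 else 0))"
    using T by (intro sum_mono norm_rep_coeff_sq_le) auto
  also have "\<dots> = 2 * T * (\<Sum>(n,m)\<in>{1..N} \<times> {-int N..int N}. (cmod (a n m))\<^sup>2)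
      + 2 * (\<Sum>n\<in>{1..N}. (cmod (b n))\<^sup>2 * tail n)"
    unfolding tail_def sum.cartesian_product[symmetric]
    by (simp add: sum.distrib sum_distrib_left mult.assoc)
  also have "\<dots> \<le> 2 * T * 1 + 2 * ((\<Sum>n\<in>{1..N}. (cmod (b n))\<^sup>2) * (4 * T))"
  proof (intro add_mono mult_left_mono)
    show "(\<Sum>(n,m)\<in>{1..N} \<times> {-int N..int N}. (cmod (a n m))\<^sup>2) \<le> 1"
      by (intro a[rule_format] conjI) auto
    show "(\<Sum>n\<in>{1..N}. (cmod (b n))\<^sup>2 * tail n) \<le> (\<Sum>n\<in>{1..N}. (cmod (b n))\<^sup>2) * (4 * T)"
      unfolding sum_distrib_right by (intro sum_mono mult_left_mono tail) simp
  qed (use T in auto)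
  also have "\<dots> \<le> 2 * T * 1 + 2 * (1 * (4 * T))"
    using T by (intro add_mono mult_left_mono mult_right_mono b[rule_format]) auto
  finally show ?thesis by simp
qed

definition L2_sq_norm :: "real \<Rightarrow> (real \<Rightarrow> real^3 \<Rightarrow> complex) \<Rightarrow> ennreal" where
  "L2_sq_norm T f = (\<integral>\<^sup>+t\<in>{0..T}. (\<integral>\<^sup>+x\<in>ball 0 1. ennreal ((cmod (f t x))\<^sup>2) \<partial>lborel) \<partial>lborel)"

lemma nn_integral_unit_ball_rep_partial:
  "(\<integral>\<^sup>+x\<in>ball 0 1. ennreal ((cmod (c * rep_partial T a b N t x))\<^sup>2) \<partial>lborel)
     = ennreal (3/2 * unit_ball_vol 3 * (cmod c)\<^sup>2 * (\<Sum>n\<in>{1..N}. (cmod (rep_mode T a b N n t))\<^sup>2))"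
  unfolding rep_partial_eq_sum_rep_mode sum_distrib_left mult.assoc[symmetric] nn_integral_unit_ball_e_rad_sum
  by (simp add: norm_mult power_mult_distrib sum_distrib_left mult_ac)

lemma L2_sq_norm_rep_partial_le:
  assumes T: "0 < T" "T \<le> 1"
    and a: "\<forall>F. finite F \<and> F \<subseteq> {1..} \<times> UNIV \<longrightarrow> (\<Sum>(n,m)\<in>F. (cmod (a n m))\<^sup>2) \<le> 1"
    and b: "\<forall>F. finite F \<and> F \<subseteq> {1..} \<longrightarrow> (\<Sum>n\<in>F. (cmod (b n))\<^sup>2) \<le> 1"
  shows "L2_sq_norm T (\<lambda>t x. c * rep_partial T a b N t x) \<le> ennreal (15 * unit_ball_vol 3 * (cmod c)\<^sup>2 * T)"
proof -
  let ?K = "3/2 * unit_ball_vol 3 * (cmod c)\<^sup>2"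
  have [measurable]: "(\<lambda>t. rep_mode T a b N n t) \<in> borel_measurable borel" for n
    unfolding rep_mode_def by measurable
  have "L2_sq_norm T (\<lambda>t x. c * rep_partial T a b N t x)
      = (\<integral>\<^sup>+t. ennreal ?K * (\<Sum>n\<in>{1..N}. ennreal ((cmod (rep_mode T a b N n t))\<^sup>2) * indicator {0..T} t) \<partial>lborel)"
    unfolding L2_sq_norm_def nn_integral_unit_ball_rep_partial
    by (intro nn_integral_cong, subst ennreal_mult') (simp_all add: sum_nonneg mult.assoc flip: sum_distrib_right)
  also have "\<dots> = ennreal ?K * (\<integral>\<^sup>+t. (\<Sum>n\<in>{1..N}. ennreal ((cmod (rep_mode T a b N n t))\<^sup>2) * indicator {0..T} t) \<partial>lborel)"
    by (rule nn_integral_cmult) measurable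
  also have "\<dots> = ennreal ?K * (\<Sum>n\<in>{1..N}. \<integral>\<^sup>+t\<in>{0..T}. ennreal ((cmod (rep_mode T a b N n t))\<^sup>2) \<partial>lborel)"
    by (subst nn_integral_sum) auto
  also have "\<dots> \<le> ennreal ?K * (\<Sum>n\<in>{1..N}. ennreal (\<Sum>m\<in>{-int N..int N}. (cmod (rep_coeff T a b n m))\<^sup>2))"
    unfolding rep_mode_def using T by (intro mult_left_mono sum_mono nn_integral_e_time_sum_le) auto
  also have "\<dots> = ennreal ?K * ennreal (\<Sum>n\<in>{1..N}. \<Sum>m\<in>{-int N..int N}. (cmod (rep_coeff T a b n m))\<^sup>2)"
    by (simp add: sum_nonneg)
  also have "\<dots> = ennreal (?K * (\<Sum>n\<in>{1..N}. \<Sum>m\<in>{-int N..int N}. (cmod (rep_coeff T a b n m))\<^sup>2))"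
    by (rule ennreal_mult'[symmetric]) simp
  also have "\<dots> \<le> ennreal (?K * (10 * T))"
    using sum_norm_rep_coeff_sq_le[OF T a b] by (intro ennreal_leI mult_left_mono) auto
  finally show ?thesis by (simp add: mult_ac)
qed

lemma L2_sq_norm_le_of_in_scaled_ball:
  assumes T: "0 < T" "T \<le> 1" and f: "in_scaled_ball T lam f"
  shows "L2_sq_norm T f \<le> ennreal (30 * unit_ball_vol 3 * lam\<^sup>2 * T)"
proof -
  obtain a b
    where a: "\<forall>F. finite F \<and> F \<subseteq> {1..} \<times> UNIV \<longrightarrow> (\<Sum>(n,m)\<in>F. (cmod (a n m))\<^sup>2) \<le> 1"
      and b: "\<forall>F. finite F \<and> F \<subseteq> {1..} \<longrightarrow> (\<Sum>n\<in>F. (cmod (b n))\<^sup>2) \<le> 1"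
      and lim: "(\<lambda>N. L2_sq_norm T (\<lambda>t x. f t x - complex_of_real lam * rep_partial T a b N t x)) \<longlonglongrightarrow> 0"
    using f unfolding in_scaled_ball_def L2_sq_norm_def by blast
  let ?E = "\<lambda>N. L2_sq_norm T (\<lambda>t x. f t x - complex_of_real lam * rep_partial T a b N t x)"
  let ?C = "15 * unit_ball_vol 3 * lam\<^sup>2 * T"
  have approx: "L2_sq_norm T f \<le> 2 * (?E N + ennreal ?C)" for N
  proof -
    have [measurable]: "(\<lambda>x. complex_of_real lam * rep_partial T a b N t x) \<in> borel_measurable lborel" for t
      unfolding rep_partial_def e_rad_def by measurable
    have [measurable]: "(\<lambda>t. rep_mode T a b N n t) \<in> borel_measurable borel" for n
      unfolding rep_mode_def by measurable
    have "L2_sq_norm T f \<le> 2 * (?E N + L2_sq_norm T (\<lambda>t x. complex_of_real lam * rep_partial T a b N t x))"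
      unfolding L2_sq_norm_def
      by (rule nn_integral_norm_sq_le_approx) (simp_all add: nn_integral_unit_ball_rep_partial)
    also have "\<dots> \<le> 2 * (?E N + ennreal ?C)"
      using L2_sq_norm_rep_partial_le[OF T a b, of "complex_of_real lam" N]
      by (intro mult_left_mono add_left_mono) simp_all
    finally show ?thesis .
  qed
  show ?thesis
  proof (rule ennreal_le_epsilon)
    fix e :: real assume "0 < e"
    then obtain N where "?E N < ennreal (e / 2)"
      using order_tendstoD(2)[OF lim, of "ennreal (e / 2)"] by (auto simp: eventually_sequentially)
    then have "L2_sq_norm T f \<le> 2 * (ennreal (e / 2) + ennreal ?C)"
      using approx[of N] by (meson add_right_mono less_imp_le mult_left_mono order_trans zero_le)
    also have "\<dots> = ennreal (30 * unit_ball_vol 3 * lam\<^sup>2 * T) + ennreal e"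
      using \<open>0 < e\<close> T by (simp add: distrib_left add.commute flip: ennreal_numeral ennreal_mult)
    finally show "L2_sq_norm T f \<le> ennreal (30 * unit_ball_vol 3 * lam\<^sup>2 * T) + ennreal e" .
  qed
qed

theorem lemma2p1:
  "\<exists>C::real. \<forall>(T::real) (f::real \<Rightarrow> real^3 \<Rightarrow> complex).
     0 < T \<and> T \<le> 1 \<and> triple_norm T f \<le> 1 \<longrightarrow>
     ennreal (1 / T) * (\<integral>\<^sup>+ t\<in>{0..T}. (\<integral>\<^sup>+ x\<in>ball 0 1. ennreal ((cmod (f t x))\<^sup>2) \<partial>lborel) \<partial>lborel)
       \<le> ennreal C"
proof (intro exI[of _ "120 * unit_ball_vol 3"] allI impI)
  fix T :: real and f :: "real \<Rightarrow> real^3 \<Rightarrow> complex"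
  assume "0 < T \<and> T \<le> 1 \<and> triple_norm T f \<le> 1"
  then have T: "0 < T" "T \<le> 1" and "triple_norm T f < 2"
    using le_less_trans[of "triple_norm T f" 1 2] by auto
  then obtain lam where lam: "0 < lam" "ennreal lam < 2" and f: "in_scaled_ball T lam f"
    unfolding triple_norm_def by (auto simp: Inf_less_iff)
  have "L2_sq_norm T f \<le> ennreal (30 * unit_ball_vol 3 * lam\<^sup>2 * T)"
    using T f by (rule L2_sq_norm_le_of_in_scaled_ball)
  also have "\<dots> \<le> ennreal (120 * unit_ball_vol 3 * T)"
  proof -
    have "lam < 2"
      using lam by (metis ennreal_less_iff ennreal_numeral less_le)
    then have "lam\<^sup>2 \<le> 4"
      using power_mono[of lam 2 2] lam(1) by simp
    then show ?thesis
      using T by (intro ennreal_leI) simp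
  qed
  finally have "ennreal (1 / T) * L2_sq_norm T f \<le> ennreal (1 / T) * ennreal (120 * unit_ball_vol 3 * T)"
    by (rule mult_left_mono) simp
  also have "\<dots> = ennreal (120 * unit_ball_vol 3)"
    using T by (simp flip: ennreal_mult)
  finally show "ennreal (1 / T) * (\<integral>\<^sup>+ t\<in>{0..T}. (\<integral>\<^sup>+ x\<in>ball 0 1. ennreal ((cmod (f t x))\<^sup>2) \<partial>lborel) \<partial>lborel)
       \<le> ennreal (120 * unit_ball_vol 3)"
    unfolding L2_sq_norm_def .
qed

end
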